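(* Let $f:\mathbb{R}^n\to\mathbb{R}$ be convex and continuously differentiable, and let $w^*\in\Delta^n$ be a minimizer of $f$ over $\Delta^n$. Let $T>0$ and let $t\mapsto w^t$, $t\in[0,T]$, be continuously differentiable, take values in $\operatorname{int}(\Delta^n)$, start at $w^0=(1/n,\ldots,1/n)$, and satisfy the Cauchy-Simplex gradient flow $$\frac{dw^t}{dt} = -\, w^t\odot\Big(\nabla f(w^t) - \big(w^t\cdot\nabla f(w^t)\big)\mathbb{1}\Big).$$ Then $$f(w^T)-f(w^* )\le \frac{\log(n)}{T}.$$
   Context: $\Delta^n=\{w\in\mathbb{R}^n : \sum_i w_i=1,\ w_i\ge 0\}$ is the probability simplex and $\operatorname{int}(\Delta^n)$ denotes the points of $\Delta^n$ with all coordinates strictly positive. $\odot$ denotes componentwise multiplication and $\mathbb{1}$ the all-ones vector. *)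

theory Defs
  imports "HOL-Analysis.Analysis"
begin

definition prob_simplex :: "(real ^ 'n) set" where
  "prob_simplex = {w. sum (\<lambda>i. w $ i) UNIV = 1 \<and> (\<forall>i. w $ i \<ge> 0)}"

definition prob_simplex_int :: "(real ^ 'n) set" where
  "prob_simplex_int = {w. w \<in> prob_simplex \<and> (\<forall>i. w $ i > 0)}"

definition cs_field :: "(real ^ 'n \<Rightarrow> real ^ 'n) \<Rightarrow> real ^ 'n \<Rightarrow> real ^ 'n" where
  "cs_field g w = (\<chi> i. - (w $ i * (g w $ i - (w \<bullet> g w))))"

end

theory Submission
  imports Defs
begin

text \<open>With \<open>H(u, w) = -\<Sum>\<^sub>i u\<^sub>i log w\<^sub>i\<close> the cross entropy,
  \<open>E(t) = t (f(w\<^sup>t) - f(w\<^sup>*)) + H(w\<^sup>*, w\<^sup>t)\<close> is a Lyapunov function of the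
  Cauchy-Simplex flow: \<open>H(w\<^sup>*, w\<^sup>t)\<close> decreases at rate
  \<open>\<nabla>f(w\<^sup>t) \<bullet> (w\<^sup>t - w\<^sup>*) \<ge> f(w\<^sup>t) - f(w\<^sup>*)\<close> by convexity, and \<open>f(w\<^sup>t)\<close> is
  non-increasing because its rate is minus the \<open>w\<^sup>t\<close>-weighted variance of the gradient.
  Hence \<open>T (f(w\<^sup>T) - f(w\<^sup>*)) \<le> E(T) \<le> E(0) = log n\<close>.\<close>

lemma convex_on_above_tangent:
  fixes f :: "'a::real_normed_vector \<Rightarrow> real"
  assumes convex: "convex_on UNIV f"
    and deriv: "(f has_derivative f') (at x)"
  shows "f x + f' (y - x) \<le> f y"
proof -
  define \<phi> where "\<phi> s = f (x + s *\<^sub>R (y - x))" for s :: real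
  have "convex_on UNIV \<phi>"
  proof (rule convex_onI)
    fix t a b :: real assume t: "0 < t" "t < 1"
    have "x + ((1 - t) *\<^sub>R a + t *\<^sub>R b) *\<^sub>R (y - x)
        = (1 - t) *\<^sub>R (x + a *\<^sub>R (y - x)) + t *\<^sub>R (x + b *\<^sub>R (y - x))"
      by (simp add: algebra_simps)
    then show "\<phi> ((1 - t) *\<^sub>R a + t *\<^sub>R b) \<le> (1 - t) * \<phi> a + t * \<phi> b"
      unfolding \<phi>_def using convex_onD[OF convex, of t] t by simp
  qed simp
  moreover have "(\<phi> has_real_derivative f' (y - x)) (at 0)"
  proof -
    have "((\<lambda>s. x + s *\<^sub>R (y - x)) has_vector_derivative y - x) (at 0)"
      by (auto intro!: derivative_eq_intros)
    from vector_derivative_diff_chain_within[OF this, of f f'] deriv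
    show ?thesis unfolding \<phi>_def
      by (simp add: o_def has_derivative_at_withinI
          has_real_derivative_iff_has_vector_derivative)
  qed
  ultimately have "f' (y - x) * (1 - 0) \<le> \<phi> 1 - \<phi> 0"
    by (intro convex_on_imp_above_tangent) auto
  then show ?thesis
    by (simp add: \<phi>_def)
qed

lemma has_real_derivative_comp_gradient:
  fixes f :: "'a::real_inner \<Rightarrow> real"
  assumes "(f has_derivative (\<lambda>h. g \<bullet> h)) (at (w t))"
    and "(w has_vector_derivative v) (at t within S)"
  shows "((\<lambda>s. f (w s)) has_real_derivative g \<bullet> v) (at t within S)"
  using vector_derivative_diff_chain_within[OF assms(2) has_derivative_at_withinI[OF assms(1)]]
  by (simp add: o_def has_real_derivative_iff_has_vector_derivative)

lemma DERIV_within_Icc_nonpos_imp_decreasing: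
  fixes g :: "real \<Rightarrow> real"
  assumes "a \<le> b"
    and deriv: "\<And>x. x \<in> {a..b} \<Longrightarrow> (g has_real_derivative g' x) (at x within {a..b})"
    and nonpos: "\<And>x. a < x \<Longrightarrow> x < b \<Longrightarrow> g' x \<le> 0"
  shows "g b \<le> g a"
proof (rule DERIV_nonpos_imp_decreasing_open[OF \<open>a \<le> b\<close>])
  fix x assume "a < x" "x < b"
  then show "\<exists>y. (g has_real_derivative y) (at x) \<and> y \<le> 0"
    using deriv[of x] nonpos[of x] by (auto simp: at_within_Icc_at)
next
  show "continuous_on {a..b} g"
    using deriv DERIV_continuous continuous_on_eq_continuous_within by blast
qed

definition cross_entropy :: "real ^ 'n \<Rightarrow> real ^ 'n \<Rightarrow> real" where
  "cross_entropy u w = (\<Sum>i\<in>UNIV. u $ i * - ln (w $ i))"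

lemma cross_entropy_uniform:
  assumes "(\<Sum>i\<in>UNIV. u $ i) = 1"
  shows "cross_entropy u (\<chi> i. 1 / real CARD('n)) = ln (real CARD('n))"
  using assms by (simp add: cross_entropy_def ln_div flip: sum_distrib_right)

lemma cross_entropy_nonneg:
  assumes "\<And>i. u $ i \<ge> 0" and w: "w \<in> prob_simplex"
  shows "0 \<le> cross_entropy u w"
  unfolding cross_entropy_def
proof (intro sum_nonneg mult_nonneg_nonneg assms)
  fix i
  have "w $ i \<le> (\<Sum>j\<in>UNIV. w $ j)"
    using w by (intro member_le_sum) (auto simp: prob_simplex_def)
  then show "0 \<le> - ln (w $ i)"
    using w by (cases "w $ i = 0") (auto simp: prob_simplex_def less_le)
qed

lemma has_real_derivative_cross_entropy:
  assumes "(w has_vector_derivative v) (at t within S)"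
    and "\<And>i. 0 < w t $ i"
  shows "((\<lambda>s. cross_entropy u (w s)) has_real_derivative
           (\<Sum>i\<in>UNIV. u $ i * - (v $ i / w t $ i))) (at t within S)"
proof -
  have "((\<lambda>s. w s $ i) has_real_derivative v $ i) (at t within S)" for i
    using bounded_linear.has_vector_derivative[OF bounded_linear_vec_nth assms(1)]
    by (simp add: has_real_derivative_iff_has_vector_derivative)
  then show ?thesis
    unfolding cross_entropy_def using assms(2)
    by (auto intro!: derivative_eq_intros simp: field_simps)
qed

lemma inner_cs_field:
  assumes "(\<Sum>i\<in>UNIV. w $ i) = 1"
  shows "g w \<bullet> cs_field g w = - (\<Sum>i\<in>UNIV. w $ i * (g w $ i - w \<bullet> g w)\<^sup>2)"
proof -
  let ?s = "w \<bullet> g w"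
  have "(\<Sum>i\<in>UNIV. w $ i * (g w $ i - ?s)) = ?s - (\<Sum>i\<in>UNIV. w $ i) * ?s"
    by (simp add: right_diff_distrib sum_subtractf inner_vec_def flip: sum_distrib_right)
  then have centred: "(\<Sum>i\<in>UNIV. w $ i * (g w $ i - ?s)) = 0"
    using assms by simp
  have "g w \<bullet> cs_field g w
      = (\<Sum>i\<in>UNIV. - (w $ i * (g w $ i - ?s)\<^sup>2) - ?s * (w $ i * (g w $ i - ?s)))"
    unfolding inner_vec_def cs_field_def
    by (intro sum.cong) (simp_all add: power2_eq_square algebra_simps)
  also have "\<dots> = - (\<Sum>i\<in>UNIV. w $ i * (g w $ i - ?s)\<^sup>2)"
    by (simp add: sum_subtractf sum_negf centred flip: sum_distrib_left)
  finally show ?thesis .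
qed

lemma inner_cs_field_nonpos:
  assumes "w \<in> prob_simplex"
  shows "g w \<bullet> cs_field g w \<le> 0"
  using assms by (auto simp: inner_cs_field prob_simplex_def intro!: sum_nonneg)

lemma cross_entropy_rate_cs_field:
  assumes "(\<Sum>i\<in>UNIV. u $ i) = 1" and "\<And>i. w $ i \<noteq> 0"
  shows "(\<Sum>i\<in>UNIV. u $ i * - (cs_field g w $ i / w $ i)) = g w \<bullet> (u - w)"
proof -
  have "(\<Sum>i\<in>UNIV. u $ i * - (cs_field g w $ i / w $ i))
      = (\<Sum>i\<in>UNIV. u $ i * (g w $ i - w \<bullet> g w))"
    using assms(2) by (intro sum.cong) (auto simp: cs_field_def)
  also have "\<dots> = u \<bullet> g w - (\<Sum>i\<in>UNIV. u $ i) * (w \<bullet> g w)"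
    by (simp add: right_diff_distrib sum_subtractf inner_vec_def flip: sum_distrib_right)
  finally show ?thesis
    using assms(1) by (simp add: inner_diff_right inner_commute)
qed

lemma has_real_derivative_cross_entropy_cs_flow:
  assumes "(w has_vector_derivative cs_field g (w t)) (at t within S)"
    and "\<And>i. 0 < w t $ i" and "(\<Sum>i\<in>UNIV. u $ i) = 1"
  shows "((\<lambda>s. cross_entropy u (w s)) has_real_derivative g (w t) \<bullet> (u - w t)) (at t within S)"
  using has_real_derivative_cross_entropy[OF assms(1,2), of u]
    cross_entropy_rate_cs_field[OF assms(3) less_imp_neq[OF assms(2), symmetric]]
  by simp

theorem theorem4p3:
  fixes f :: "real ^ 'n \<Rightarrow> real"
    and grad :: "real ^ 'n \<Rightarrow> real ^ 'n"
    and w :: "real \<Rightarrow> real ^ 'n"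
    and wstar :: "real ^ 'n"
    and T :: real
  assumes convex: "convex_on UNIV f"
    and grad: "\<And>x. (f has_derivative (\<lambda>h. grad x \<bullet> h)) (at x)"
    and grad_cont: "continuous_on UNIV grad"
    and wstar_in: "wstar \<in> prob_simplex"
    and wstar_min: "\<And>v. v \<in> prob_simplex \<Longrightarrow> f wstar \<le> f v"
    and T_pos: "T > 0"
    and w_int: "\<And>t. t \<in> {0..T} \<Longrightarrow> w t \<in> prob_simplex_int"
    and w_init: "w 0 = (\<chi> i. 1 / real CARD('n))"
    and w_flow: "\<And>t. t \<in> {0..T} \<Longrightarrow>
                   (w has_vector_derivative cs_field grad (w t)) (at t within {0..T})"
    and w_C1: "continuous_on {0..T} (\<lambda>t. cs_field grad (w t))"
  shows "f (w T) - f wstar \<le> ln (real CARD('n)) / T"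
proof -
  define E where "E t = t * (f (w t) - f wstar) + cross_entropy wstar (w t)" for t
  define E' where "E' t = t * (grad (w t) \<bullet> cs_field grad (w t))
    + (f (w t) + grad (w t) \<bullet> (wstar - w t) - f wstar)" for t
  have wstar_sum: "(\<Sum>i\<in>UNIV. wstar $ i) = 1"
    using wstar_in by (simp add: prob_simplex_def)
  have w_simplex: "w t \<in> prob_simplex" and w_pos: "\<And>i. 0 < w t $ i" if "t \<in> {0..T}" for t
    using w_int[OF that] by (auto simp: prob_simplex_int_def)
  have E_deriv: "(E has_real_derivative E' t) (at t within {0..T})" if t: "t \<in> {0..T}" for t
  proof -
    have "(E has_real_derivative 1 * (f (w t) - f wstar)
        + (grad (w t) \<bullet> cs_field grad (w t) - 0) * t + grad (w t) \<bullet> (wstar - w t))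
        (at t within {0..T})"
      unfolding E_def
      by (intro DERIV_add DERIV_mult DERIV_ident DERIV_diff DERIV_const
          has_real_derivative_comp_gradient[OF grad w_flow[OF t]]
          has_real_derivative_cross_entropy_cs_flow[OF w_flow[OF t] w_pos[OF t] wstar_sum])
    then show ?thesis
      by (simp add: E'_def algebra_simps)
  qed
  have E'_nonpos: "E' t \<le> 0" if "0 < t" "t < T" for t
    using that inner_cs_field_nonpos[OF w_simplex, of t grad]
      convex_on_above_tangent[OF convex grad, of "w t" wstar]
    by (auto simp: E'_def intro!: add_nonpos_nonpos mult_nonneg_nonpos)
  have "E T \<le> E 0"
    using T_pos by (intro DERIV_within_Icc_nonpos_imp_decreasing[OF _ E_deriv E'_nonpos]) auto
  also have "E 0 = ln (real CARD('n))"
    by (simp add: E_def w_init cross_entropy_uniform[OF wstar_sum])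
  finally have "E T \<le> ln (real CARD('n))" .
  moreover have "0 \<le> cross_entropy wstar (w T)"
    using wstar_in T_pos by (intro cross_entropy_nonneg w_simplex) (auto simp: prob_simplex_def)
  ultimately have "T * (f (w T) - f wstar) \<le> ln (real CARD('n))"
    by (simp add: E_def)
  then show ?thesis
    using T_pos by (simp add: field_simps)
qed

end
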